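(* For any integers $n,m\ge 1$, $$\sum_{\pi\in\mathfrak{S}_n}q^{{\rm altmaj}(\pi)}\in (1+q^m)^{\lfloor n/2m\rfloor}\mathbb{Z}[q].$$
   Context: $\mathfrak{S}_n$ is the set of permutations $\pi=\pi_1\cdots\pi_n$ of $\{1,\dots,n\}$; $\widehat{D}(\pi)=\{2i:\pi_{2i}<\pi_{2i+1}\}\cup\{2i+1:\pi_{2i+1}>\pi_{2i+2}\}$ (indices in $\{1,\dots,n-1\}$) and ${\rm altmaj}(\pi)=\sum_{i\in\widehat{D}(\pi)}i$. *)

theory Defs
  imports "HOL-Combinatorics.Permutations" "HOL-Computational_Algebra.Polynomial"
begin

text \<open>A permutation pi = pi_1 ... pi_n of {1,...,n} is represented by a function
  p with p permutes {1..n}, where pi_i = p i.\<close>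

definition alt_des :: "nat \<Rightarrow> (nat \<Rightarrow> nat) \<Rightarrow> nat set" where
  "alt_des n p = {i \<in> {1..<n}. (even i \<and> p i < p (Suc i)) \<or> (odd i \<and> p i > p (Suc i))}"

definition altmaj :: "nat \<Rightarrow> (nat \<Rightarrow> nat) \<Rightarrow> nat" where
  "altmaj n p = (\<Sum>i\<in>alt_des n p. i)"

definition altmaj_poly :: "nat \<Rightarrow> int poly" where
  "altmaj_poly n = (\<Sum>p\<in>{p. p permutes {1..n}}. monom 1 (altmaj n p))"

end

theory Submission
  imports Defs "HOL-Combinatorics.Multiset_Permutations" "HOL-Computational_Algebra.Polynomial_Factorial"
begin

text \<open>Write \<open>f = 1 + q^m\<close>, so that \<open>q^e \<equiv> q^e' (mod f)\<close> whenever \<open>e \<equiv> e' (mod 2m)\<close>.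
  Permutations are treated as words, and the altmaj generating function is refined by
  prescribing alternating descents at positions \<open>I\<close>, forbidding them at positions \<open>U\<close> and not
  counting positions in \<open>J\<close>; cutting the words at an uncounted, unprescribed even position
  factorises it into a sum of products. For words of length \<open>2mr\<close> and the frame
  \<open>F = {2m, 4m, \<dots>, 2m(r - 1)}\<close> let \<open>g(I)\<close> count the words with descents at \<open>I \<subseteq> F\<close> and
  none at \<open>F - I\<close>. Cutting at \<open>a \<in> I\<close> and induction on \<open>r\<close> give \<open>g(I) \<equiv> -g(I - {a})\<close>,
  so \<open>g(F) \<equiv> (-1)^(r-1) g({})\<close>, whereas reversing the words gives \<open>g(F) \<equiv> (-1)^r g({})\<close>.
  Hence \<open>f\<close> divides \<open>2 g({})\<close>, so (\<open>f\<close> being primitive) \<open>g({})\<close> and every \<open>g(I)\<close>.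
  Cutting a word of length \<open>n\<close> at the multiples of \<open>2m\<close> then yields one factor \<open>f\<close> per
  complete block.\<close>

section \<open>Divisibility by \<open>1 + q^m\<close>\<close>

lemma diff_dvd_power_diff:
  fixes x y :: "'a::comm_ring_1"
  shows "x - y dvd x ^ n - y ^ n"
  by (simp add: power_diff_sumr2)

lemma one_plus_power_dvd_power_minus_sign:
  fixes x :: "'a::comm_ring_1"
  shows "1 + x ^ m dvd x ^ (m * k) - (-1) ^ k"
  using diff_dvd_power_diff[of "x ^ m" "-1" k] by (simp add: power_mult add.commute)

lemma one_plus_power_dvd_power_diff:
  fixes x :: "'a::comm_ring_1"
  assumes "e mod (2 * m) = e' mod (2 * m)"
  shows "1 + x ^ m dvd x ^ e - x ^ e'"
proof -
  have shift: "1 + x ^ m dvd x ^ (a + 2 * m * t) - x ^ a" for a t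
  proof -
    have "1 + x ^ m dvd x ^ a * (x ^ (m * (2 * t)) - (-1) ^ (2 * t))"
      by (intro dvd_mult one_plus_power_dvd_power_minus_sign)
    then show ?thesis by (simp add: power_add algebra_simps)
  qed
  show ?thesis
  proof (cases "e \<le> e'")
    case True
    with assms obtain t where "e' = e + 2 * m * t"
      by (metis le_add_diff_inverse mod_eq_dvd_iff_nat dvdE)
    then show ?thesis using shift[of e t] dvd_minus_iff by fastforce
  next
    case False
    with assms obtain t where "e = e' + 2 * m * t"
      by (metis le_add_diff_inverse nat_le_linear mod_eq_dvd_iff_nat dvdE)
    then show ?thesis using shift by simp
  qed
qed

lemma one_plus_monom_dvd_monom_diff:
  assumes "e mod (2 * m) = e' mod (2 * m)"
  shows "(1 + monom 1 m :: 'a::comm_ring_1 poly) dvd monom 1 e - monom 1 e'"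
  using one_plus_power_dvd_power_diff[OF assms, of "monom 1 1 :: 'a poly"]
  by (simp add: monom_power)

lemma one_plus_monom_dvd_monom_minus_one:
  "2 * m dvd e \<Longrightarrow> (1 + monom 1 m :: 'a::comm_ring_1 poly) dvd monom 1 e - 1"
  using one_plus_monom_dvd_monom_diff[of e m 0] by simp

lemma one_plus_monom_dvd_monom_minus_sign:
  "(1 + monom 1 m :: 'a::comm_ring_1 poly) dvd monom 1 (m * k) - (-1) ^ k"
  using one_plus_power_dvd_power_minus_sign[of "monom 1 1 :: 'a poly" m k]
  by (simp add: monom_power)

lemma content_one_plus_monom:
  assumes "m \<ge> 1"
  shows "content (1 + monom 1 m :: int poly) = 1"
proof -
  have "coeff (1 + monom 1 m :: int poly) m = 1"
    using assms by (simp add: coeff_1)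
  then have "content (1 + monom 1 m :: int poly) dvd 1"
    by (metis content_dvd_coeff)
  then show ?thesis using normalize_content[of "1 + monom 1 m :: int poly"] by simp
qed

lemma primitive_dvd_smult_cancel:
  fixes f g :: "int poly"
  assumes "content f = 1" "f dvd smult c g" "c \<noteq> 0"
  shows "f dvd g"
proof (rule fract_poly_dvdD[OF _ assms(1)])
  have "fract_poly f dvd smult (to_fract c) (fract_poly g)"
    using fract_poly_dvd[OF assms(2)] by simp
  then show "fract_poly f dvd fract_poly g"
    using assms(3) by (auto elim: dvd_smult_cancel)
qed

lemma dvd_diff_neg_one_power_card:
  fixes g :: "'a set \<Rightarrow> 'b::comm_ring_1"
  assumes "finite F" "I \<subseteq> F"
    and pair: "\<And>I a. I \<subseteq> F \<Longrightarrow> a \<in> I \<Longrightarrow> f dvd g I + g (I - {a})"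
  shows "f dvd g I - (-1) ^ card I * g {}"
  using finite_subset[OF assms(2,1)] assms(2)
proof (induction I rule: finite_subset_induct')
  case empty
  then show ?case by simp
next
  case (insert a I)
  have "f dvd g (insert a I) + g I"
    using pair[of "insert a I" a] insert by simp
  from dvd_diff[OF this insert.IH] show ?case
    using insert by (simp add: algebra_simps)
qed

section \<open>Alternating descents of words\<close>

(* Positions are 1-based as in the paper: xs ! (i - 1) is the i-th letter. *)
definition alt_desc :: "nat list \<Rightarrow> nat \<Rightarrow> bool" where
  "alt_desc xs i \<longleftrightarrow> (even i \<and> xs ! (i - 1) < xs ! i) \<or> (odd i \<and> xs ! (i - 1) > xs ! i)"

definition alt_pattern :: "nat set \<Rightarrow> nat set \<Rightarrow> nat list \<Rightarrow> bool" where
  "alt_pattern I U xs \<longleftrightarrow> (\<forall>i\<in>I. alt_desc xs i) \<and> (\<forall>i\<in>U. \<not> alt_desc xs i)"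

definition shifted_altmaj :: "nat \<Rightarrow> nat set \<Rightarrow> nat list \<Rightarrow> nat" where
  "shifted_altmaj s J xs = (\<Sum>i=1..<length xs. if i \<notin> J \<and> alt_desc xs i then i + s else 0)"

(* Every counted position is raised by s, so that after cutting a word at p its right part is
   counted with offset s + p, exactly as inside the whole word. *)
definition altmaj_gf :: "nat \<Rightarrow> nat set \<Rightarrow> nat set \<Rightarrow> nat set \<Rightarrow> nat set \<Rightarrow> int poly" where
  "altmaj_gf s I U J V =
     (\<Sum>xs\<in>permutations_of_set V. if alt_pattern I U xs then monom 1 (shifted_altmaj s J xs) else 0)"

definition shift_down :: "nat \<Rightarrow> nat set \<Rightarrow> nat set" where
  "shift_down p X = {i. 0 < i \<and> p + i \<in> X}"

lemma bij_betw_permutes_map: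
  assumes "xs \<in> permutations_of_set A"
  shows "bij_betw (\<lambda>p. map p xs) {p. p permutes A} (permutations_of_set A)"
proof -
  have A: "finite A" "set xs = A" "distinct xs"
    using assms by (auto simp: permutations_of_set_def)
  have inj: "inj_on (\<lambda>p. map p xs) {p. p permutes A}"
  proof (rule inj_onI)
    fix p p' assume "p \<in> {p. p permutes A}" "p' \<in> {p. p permutes A}" "map p xs = map p' xs"
    then show "p = p'"
      using A(2) by (metis mem_Collect_eq map_eq_conv permutes_not_in ext)
  qed
  have into: "(\<lambda>p. map p xs) ` {p. p permutes A} \<subseteq> permutations_of_set A"
    using assms permutations_of_set_image_permutes by blast
  have "card ((\<lambda>p. map p xs) ` {p. p permutes A}) = card (permutations_of_set A)"
    using A by (simp add: card_image[OF inj] card_permutations)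
  then show ?thesis
    using inj into by (simp add: bij_betw_def card_subset_eq)
qed

lemma altmaj_poly_eq_gf: "altmaj_poly n = altmaj_gf 0 {} {} {} {1..n}"
proof -
  let ?xs = "[1..<Suc n]"
  have xs: "?xs \<in> permutations_of_set {1..n}"
    by (auto simp: permutations_of_set_def)
  have nth: "map p ?xs ! (i - 1) = p i" if "1 \<le> i" "i \<le> n" for p i
    using that by (simp add: nth_upt del: upt_Suc)
  have "shifted_altmaj 0 {} (map p ?xs) = altmaj n p" for p
  proof -
    have "alt_desc (map p ?xs) i \<longleftrightarrow> (even i \<and> p i < p (Suc i)) \<or> (odd i \<and> p i > p (Suc i))"
      if "i \<in> {1..<n}" for i
      using nth[of i p] nth[of "Suc i" p] that unfolding alt_desc_def by simp
    then have "alt_des n p = {i \<in> {1..<n}. alt_desc (map p ?xs) i}"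
      unfolding alt_des_def by blast
    then show ?thesis
      unfolding shifted_altmaj_def altmaj_def by (simp add: sum.inter_filter[symmetric] del: upt_Suc)
  qed
  then show ?thesis
    unfolding altmaj_poly_def altmaj_gf_def alt_pattern_def
    using sum.reindex_bij_betw[OF bij_betw_permutes_map[OF xs],
        of "\<lambda>ys. monom 1 (shifted_altmaj 0 {} ys)"]
    by simp
qed

section \<open>Cutting words\<close>

lemma alt_desc_append:
  assumes "even (length ys)" "i \<noteq> length ys"
  shows "alt_desc (ys @ zs) i \<longleftrightarrow>
    (if i < length ys then alt_desc ys i else alt_desc zs (i - length ys))"
proof (cases "i < length ys")
  case True
  then have "i - 1 < length ys" by simp
  with True show ?thesis by (simp add: alt_desc_def nth_append)
next
  case False
  with assms have "length ys < i" by simp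
  then have "(ys @ zs) ! (i - 1) = zs ! (i - length ys - 1)" "(ys @ zs) ! i = zs ! (i - length ys)"
    "even (i - length ys) \<longleftrightarrow> even i"
    using assms(1) by (simp_all add: nth_append_right)
  with False show ?thesis
    unfolding alt_desc_def by simp
qed

lemma bij_betw_append_permutations_of_set:
  assumes "p \<le> card V"
  shows "bij_betw (\<lambda>(A, ys, zs). ys @ zs)
    (SIGMA A:{A. A \<subseteq> V \<and> card A = p}. permutations_of_set A \<times> permutations_of_set (V - A))
    (permutations_of_set V)"
proof (rule bij_betw_byWitness[where f' = "\<lambda>xs. (set (take p xs), take p xs, drop p xs)"])
  let ?S = "SIGMA A:{A. A \<subseteq> V \<and> card A = p}. permutations_of_set A \<times> permutations_of_set (V - A)"
  show "(\<lambda>xs. (set (take p xs), take p xs, drop p xs)) ` permutations_of_set V \<subseteq> ?S"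
  proof
    fix b assume "b \<in> (\<lambda>xs. (set (take p xs), take p xs, drop p xs)) ` permutations_of_set V"
    then obtain xs where b: "b = (set (take p xs), take p xs, drop p xs)" "xs \<in> permutations_of_set V"
      by blast
    then have xs: "distinct xs" "set xs = V" "length xs = card V"
      using length_finite_permutations_of_set[of xs V] by (simp_all add: permutations_of_set_def)
    have "set (take p xs) \<inter> set (drop p xs) = {}"
      using xs(1) by (simp add: set_take_disj_set_drop_if_distinct)
    moreover have "set (take p xs) \<union> set (drop p xs) = V"
      using xs(2) by (metis set_append append_take_drop_id)
    ultimately have "set (drop p xs) = V - set (take p xs)"
      by blast
    moreover have "distinct (take p xs)" "distinct (drop p xs)"
      using xs(1) by simp_all
    moreover have "card (set (take p xs)) = p"
      using distinct_card[OF \<open>distinct (take p xs)\<close>] xs(3) assms by simp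
    moreover have "set (take p xs) \<subseteq> V"
      using xs(2) set_take_subset[of p xs] by simp
    ultimately show "b \<in> ?S"
      using b(1) by (simp add: permutations_of_set_def)
  qed
  show "(\<lambda>(A, ys, zs). ys @ zs) ` ?S \<subseteq> permutations_of_set V"
    by (auto simp: permutations_of_set_def)
  show "\<forall>b\<in>?S. (\<lambda>xs. (set (take p xs), take p xs, drop p xs)) ((\<lambda>(A, ys, zs). ys @ zs) b) = b"
  proof
    fix b assume "b \<in> ?S"
    moreover obtain A ys zs where "b = (A, ys, zs)"
      by (cases b) auto
    ultimately have "b = (A, ys, zs)" "length ys = p" "set ys = A"
      using length_finite_permutations_of_set[of ys A] by (auto simp: permutations_of_set_def)
    then show "(\<lambda>xs. (set (take p xs), take p xs, drop p xs)) ((\<lambda>(A, ys, zs). ys @ zs) b) = b"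
      by simp
  qed
qed simp

lemma sum_permutations_of_set_append:
  assumes "finite V" "p \<le> card V"
  shows "(\<Sum>xs\<in>permutations_of_set V. g xs) =
    (\<Sum>A | A \<subseteq> V \<and> card A = p. \<Sum>ys\<in>permutations_of_set A. \<Sum>zs\<in>permutations_of_set (V - A). g (ys @ zs))"
proof -
  let ?G = "{A. A \<subseteq> V \<and> card A = p}"
  have fin: "finite ?G"
    by (rule finite_subset[OF _ finite_Pow_iff[THEN iffD2, OF assms(1)]]) blast
  have "(\<Sum>A\<in>?G. \<Sum>ys\<in>permutations_of_set A. \<Sum>zs\<in>permutations_of_set (V - A). g (ys @ zs)) =
      (\<Sum>A\<in>?G. \<Sum>(ys, zs)\<in>permutations_of_set A \<times> permutations_of_set (V - A). g (ys @ zs))"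
    by (simp only: sum.cartesian_product)
  also have "\<dots> = (\<Sum>(A, ys, zs)\<in>(SIGMA A:?G. permutations_of_set A \<times> permutations_of_set (V - A)).
      g (ys @ zs))"
    by (rule sum.Sigma[OF fin]) simp
  also have "\<dots> = (\<Sum>xs\<in>permutations_of_set V. g xs)"
    using sum.reindex_bij_betw[OF bij_betw_append_permutations_of_set[OF assms(2)], of g]
    by (simp add: split_beta)
  finally show ?thesis
    by (rule sym)
qed

lemma ball_shift_down_split:
  assumes "p \<notin> X"
  shows "(\<forall>i\<in>X. P i) \<longleftrightarrow> (\<forall>i\<in>X \<inter> {..<p}. P i) \<and> (\<forall>i\<in>shift_down p X. P (p + i))"
proof
  assume "\<forall>i\<in>X. P i"
  then show "(\<forall>i\<in>X \<inter> {..<p}. P i) \<and> (\<forall>i\<in>shift_down p X. P (p + i))"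
    by (auto simp: shift_down_def)
next
  assume H: "(\<forall>i\<in>X \<inter> {..<p}. P i) \<and> (\<forall>i\<in>shift_down p X. P (p + i))"
  show "\<forall>i\<in>X. P i"
  proof
    fix i assume "i \<in> X"
    show "P i"
    proof (cases "i < p")
      case True
      with H \<open>i \<in> X\<close> show ?thesis by auto
    next
      case False
      moreover have "i \<noteq> p"
        using assms \<open>i \<in> X\<close> by auto
      ultimately have "i - p \<in> shift_down p X" "p + (i - p) = i"
        using \<open>i \<in> X\<close> by (auto simp: shift_down_def)
      with H show ?thesis by metis
    qed
  qed
qed

lemma alt_pattern_append:
  assumes "length ys = p" "even p" "p \<notin> I \<union> U"
  shows "alt_pattern I U (ys @ zs) \<longleftrightarrow>
    alt_pattern (I \<inter> {..<p}) (U \<inter> {..<p}) ys \<and> alt_pattern (shift_down p I) (shift_down p U) zs"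
proof -
  have desc: "alt_desc (ys @ zs) i \<longleftrightarrow> (if i < p then alt_desc ys i else alt_desc zs (i - p))"
    if "i \<in> I \<union> U" for i
  proof -
    have "i \<noteq> length ys"
      using assms that by auto
    then show ?thesis
      using alt_desc_append[of ys i zs] assms(1,2) by simp
  qed
  show ?thesis
    unfolding alt_pattern_def using assms(3) desc
    by (simp add: ball_shift_down_split[of p I] ball_shift_down_split[of p U] shift_down_def) blast
qed

lemma shifted_altmaj_append:
  assumes "length ys = p" "0 < p" "even p" "p \<in> J"
  shows "shifted_altmaj s J (ys @ zs) =
    shifted_altmaj s (J \<inter> {..<p}) ys + shifted_altmaj (s + p) (shift_down p J) zs"
proof -
  let ?q = "length zs"
  define f where "f i = (if i \<notin> J \<and> alt_desc (ys @ zs) i then i + s else 0)" for i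
  have "shifted_altmaj s J (ys @ zs) = sum f {1..<p} + sum f {p..<p + ?q}"
    unfolding shifted_altmaj_def f_def using assms(1,2)
    by (simp add: sum.atLeastLessThan_concat)
  also have "sum f {1..<p} = shifted_altmaj s (J \<inter> {..<p}) ys"
    unfolding shifted_altmaj_def f_def using assms(1,3)
    by (intro sum.cong) (auto simp: alt_desc_append)
  also have "sum f {p..<p + ?q} = (\<Sum>i=0..<?q. f (p + i))"
    using sum.shift_bounds_nat_ivl[of f 0 p ?q] by (simp add: add.commute)
  also have "\<dots> = (\<Sum>i=1..<?q. f (p + i))"
    using assms(4) by (simp add: f_def sum_shift_lb_Suc0_0_upt)
  also have "\<dots> = shifted_altmaj (s + p) (shift_down p J) zs"
    unfolding shifted_altmaj_def f_def shift_down_def using assms(1,3)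
    by (intro sum.cong) (auto simp: alt_desc_append)
  finally show ?thesis .
qed

lemma altmaj_gf_split:
  assumes "finite V" "0 < p" "p \<le> card V" "even p" "p \<in> J" "p \<notin> I \<union> U"
  shows "altmaj_gf s I U J V =
    (\<Sum>A | A \<subseteq> V \<and> card A = p.
       altmaj_gf s (I \<inter> {..<p}) (U \<inter> {..<p}) (J \<inter> {..<p}) A *
       altmaj_gf (s + p) (shift_down p I) (shift_down p U) (shift_down p J) (V - A))"
  unfolding altmaj_gf_def sum_permutations_of_set_append[OF assms(1,3)]
proof (intro sum.cong refl)
  fix A assume "A \<in> {A. A \<subseteq> V \<and> card A = p}"
  then have len: "length ys = p" if "ys \<in> permutations_of_set A" for ys
    using that length_finite_permutations_of_set by auto
  show "(\<Sum>ys\<in>permutations_of_set A. \<Sum>zs\<in>permutations_of_set (V - A).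
          if alt_pattern I U (ys @ zs) then monom 1 (shifted_altmaj s J (ys @ zs)) else 0 :: int poly) =
    (\<Sum>ys\<in>permutations_of_set A.
        if alt_pattern (I \<inter> {..<p}) (U \<inter> {..<p}) ys
        then monom 1 (shifted_altmaj s (J \<inter> {..<p}) ys) else 0) *
    (\<Sum>zs\<in>permutations_of_set (V - A).
        if alt_pattern (shift_down p I) (shift_down p U) zs
        then monom 1 (shifted_altmaj (s + p) (shift_down p J) zs) else 0)"
    unfolding sum_product
    using len assms alt_pattern_append shifted_altmaj_append
    by (intro sum.cong refl) (simp add: mult_monom)
qed

lemma altmaj_gf_case_split:
  "altmaj_gf s I U J V = altmaj_gf s (insert a I) U J V + altmaj_gf s I (insert a U) J V"
  unfolding altmaj_gf_def alt_pattern_def sum.distrib[symmetric]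
  by (intro sum.cong refl) auto

lemma shifted_altmaj_insert:
  assumes "a \<in> {1..<length xs}" "a \<notin> J"
  shows "shifted_altmaj s J xs = shifted_altmaj s (insert a J) xs + (if alt_desc xs a then a + s else 0)"
proof -
  let ?f = "\<lambda>J i. if i \<notin> J \<and> alt_desc xs i then i + s else 0"
  have "shifted_altmaj s J xs = ?f J a + sum (?f J) ({1..<length xs} - {a})"
    unfolding shifted_altmaj_def using assms(1) by (simp add: sum.remove)
  also have "sum (?f J) ({1..<length xs} - {a}) = sum (?f (insert a J)) ({1..<length xs} - {a})"
    by (intro sum.cong) auto
  also have "\<dots> = shifted_altmaj s (insert a J) xs"
    unfolding shifted_altmaj_def using assms(1) by (simp add: sum.remove)
  finally show ?thesis
    using assms(2) by simp
qed

lemma altmaj_gf_insert_ignored: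
  assumes "a \<in> {1..<card V}" "a \<notin> J"
  shows "altmaj_gf s I U J V =
    altmaj_gf s I U (insert a J) V + (monom 1 (a + s) - 1) * altmaj_gf s (insert a I) U (insert a J) V"
  unfolding altmaj_gf_def sum_distrib_left sum.distrib[symmetric]
proof (intro sum.cong refl)
  fix xs assume "xs \<in> permutations_of_set V"
  then have "a \<in> {1..<length xs}"
    using assms(1) length_finite_permutations_of_set[of xs V] by simp
  then show "(if alt_pattern I U xs then monom 1 (shifted_altmaj s J xs) else 0) =
    (if alt_pattern I U xs then monom 1 (shifted_altmaj s (insert a J) xs) else 0) +
    (monom 1 (a + s) - 1) *
    (if alt_pattern (insert a I) U xs then monom 1 (shifted_altmaj s (insert a J) xs) else 0 :: int poly)"
    using shifted_altmaj_insert[of a xs J s] assms(2)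
    by (cases "alt_desc xs a") (simp_all add: alt_pattern_def mult_monom algebra_simps)
qed

lemma shifted_altmaj_mod:
  assumes "d dvd s" "\<forall>j\<in>J. d dvd j"
  shows "shifted_altmaj s J xs mod d = shifted_altmaj 0 {} xs mod d"
proof -
  obtain k where s: "s = d * k"
    using assms(1) by blast
  have "(if i \<notin> J \<and> alt_desc xs i then i + s else 0) mod d = (if alt_desc xs i then i else 0) mod d" for i
    using assms(2) by (auto simp: s)
  then show ?thesis
    unfolding shifted_altmaj_def by (subst (1 2) mod_sum_eq[symmetric]) (simp cong: if_cong)
qed

lemma altmaj_gf_mod:
  assumes "2 * m dvd s" "\<forall>j\<in>J. 2 * m dvd j"
  shows "1 + monom 1 m dvd altmaj_gf s I U J V - altmaj_gf 0 I U {} V"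
  unfolding altmaj_gf_def sum_subtractf[symmetric]
proof (intro dvd_sum)
  fix xs
  show "1 + monom 1 m dvd
    (if alt_pattern I U xs then monom 1 (shifted_altmaj s J xs) else 0) -
    (if alt_pattern I U xs then monom 1 (shifted_altmaj 0 {} xs) else 0 :: int poly)"
    using one_plus_monom_dvd_monom_diff[where 'a = int, OF shifted_altmaj_mod[OF assms], of xs]
    by simp
qed

section \<open>Reversing words\<close>

lemma alt_desc_rev:
  assumes "distinct xs" "even (length xs)" "i \<in> {1..<length xs}"
  shows "alt_desc (rev xs) i \<longleftrightarrow> \<not> alt_desc xs (length xs - i)"
proof -
  let ?n = "length xs"
  have "rev xs ! (i - 1) = xs ! (?n - i)" "rev xs ! i = xs ! (?n - i - 1)"
    using assms(3) by (cases i; simp add: rev_nth)+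
  moreover have "even (?n - i) \<longleftrightarrow> even i"
    using assms(2,3) by simp
  moreover have "xs ! (?n - i) \<noteq> xs ! (?n - i - 1)"
  proof -
    have "?n - i < ?n" "?n - i - 1 < ?n" "?n - i \<noteq> ?n - i - 1"
      using assms(3) by auto
    then show ?thesis
      using nth_eq_iff_index_eq[OF assms(1)] by blast
  qed
  ultimately show ?thesis
    unfolding alt_desc_def by auto
qed

lemma shifted_altmaj_rev:
  assumes "distinct xs" "even (length xs)"
  defines "n \<equiv> length xs"
  shows "shifted_altmaj 0 {} (rev xs) + (\<Sum>i=1..<n. i) =
    n * card {j\<in>{1..<n}. \<not> alt_desc xs j} + shifted_altmaj 0 {} xs"
proof -
  let ?N = "{j\<in>{1..<n}. \<not> alt_desc xs j}"
  have "shifted_altmaj 0 {} (rev xs) = (\<Sum>i=1..<n. if \<not> alt_desc xs (n - i) then i else 0)"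
    unfolding shifted_altmaj_def n_def using assms(1,2) by (intro sum.cong) (auto simp: alt_desc_rev)
  also have "\<dots> = (\<Sum>j=1..<n. if \<not> alt_desc xs j then n - j else 0)"
    by (rule sum.reindex_bij_witness[where i = "\<lambda>j. n - j" and j = "\<lambda>i. n - i"]) auto
  also have "\<dots> = (\<Sum>j\<in>?N. n - j)"
    by (rule sum.inter_filter[symmetric]) simp
  finally have rev: "shifted_altmaj 0 {} (rev xs) = (\<Sum>j\<in>?N. n - j)" .
  have "(\<Sum>i=1..<n. i) = (\<Sum>j\<in>{j\<in>{1..<n}. alt_desc xs j} \<union> ?N. j)"
    by (rule sum.cong) auto
  also have "\<dots> = (\<Sum>j\<in>{j\<in>{1..<n}. alt_desc xs j}. j) + (\<Sum>j\<in>?N. j)"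
    by (rule sum.union_disjoint) auto
  also have "(\<Sum>j\<in>{j\<in>{1..<n}. alt_desc xs j}. j) = shifted_altmaj 0 {} xs"
    unfolding shifted_altmaj_def n_def by (subst sum.inter_filter) (simp_all cong: if_cong)
  finally have total: "(\<Sum>i=1..<n. i) = shifted_altmaj 0 {} xs + (\<Sum>j\<in>?N. j)" .
  have "(\<Sum>j\<in>?N. n - j) + (\<Sum>j\<in>?N. j) = n * card ?N"
    by (simp add: sum.distrib[symmetric])
  then show ?thesis
    using rev total by simp
qed

lemma alt_pattern_rev:
  assumes "distinct xs" "even (length xs)" "F \<subseteq> {1..<length xs}"
    and "\<And>a. a \<in> F \<Longrightarrow> length xs - a \<in> F"
  shows "alt_pattern F {} (rev xs) \<longleftrightarrow> alt_pattern {} F xs"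
proof -
  let ?n = "length xs"
  have "alt_pattern F {} (rev xs) \<longleftrightarrow> (\<forall>a\<in>F. \<not> alt_desc xs (?n - a))"
    unfolding alt_pattern_def using assms(1-3) alt_desc_rev by blast
  also have "\<dots> \<longleftrightarrow> (\<forall>a\<in>F. \<not> alt_desc xs a)"
  proof -
    have "?n - (?n - a) = a" if "a \<in> F" for a
      using that assms(3) by auto
    then show ?thesis
      using assms(4) by metis
  qed
  finally show ?thesis
    unfolding alt_pattern_def by simp
qed

lemma one_plus_monom_dvd_altmaj_rev:
  assumes "m \<ge> 1" "distinct xs" "length xs = 2 * m * r"
  shows "(1 + monom 1 m :: int poly) dvd
    monom 1 (shifted_altmaj 0 {} xs) - (-1) ^ r * monom 1 (shifted_altmaj 0 {} (rev xs))"
proof -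
  define n where "n = length xs"
  define E where "E = shifted_altmaj 0 {}"
  have sign: "(1 + monom 1 m :: int poly) dvd monom 1 (\<Sum>i=1..<n. i) - (-1) ^ r"
  proof -
    have "(\<Sum>i=1..<n. i) = m * (r * (n - 1))"
      using Sum_Ico_nat[of 1 n] assms(3) by (simp add: n_def)
    moreover have "(-1 :: int poly) ^ (r * (n - 1)) = (-1) ^ r"
    proof (cases "r = 0")
      case False
      then have "odd (n - 1)"
        using assms(1,3) by (simp add: n_def)
      then show ?thesis
        by (simp add: power_mult mult.commute[of r])
    qed simp
    ultimately show ?thesis
      using one_plus_monom_dvd_monom_minus_sign[where 'a = int, of m "r * (n - 1)"] by simp
  qed
  have "even (length xs)"
    using assms(3) by simp
  then obtain c where "E (rev xs) + (\<Sum>i=1..<n. i) = 2 * m * r * c + E xs"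
    using shifted_altmaj_rev[OF assms(2)] assms(3) unfolding E_def n_def by metis
  then have "(E (rev xs) + (\<Sum>i=1..<n. i)) mod (2 * m) = E xs mod (2 * m)"
    by (metis mod_mult_self4 mult.assoc)
  then have "(1 + monom 1 m :: int poly) dvd
      monom 1 (E xs) - monom 1 (E (rev xs)) * monom 1 (\<Sum>i=1..<n. i)"
    using one_plus_monom_dvd_monom_diff[where 'a = int] by (metis mult_monom mult_1)
  moreover have "(1 + monom 1 m :: int poly) dvd
      monom 1 (E (rev xs)) * (monom 1 (\<Sum>i=1..<n. i) - (-1) ^ r)"
    using sign by (rule dvd_mult)
  ultimately have "(1 + monom 1 m :: int poly) dvd
      (monom 1 (E xs) - monom 1 (E (rev xs)) * monom 1 (\<Sum>i=1..<n. i)) +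
      monom 1 (E (rev xs)) * (monom 1 (\<Sum>i=1..<n. i) - (-1) ^ r)"
    by (rule dvd_add)
  then show ?thesis
    unfolding E_def by (simp add: algebra_simps)
qed

lemma altmaj_gf_rev:
  assumes "m \<ge> 1" "finite V" "card V = 2 * m * r" "F \<subseteq> {1..<card V}"
    and "\<And>a. a \<in> F \<Longrightarrow> card V - a \<in> F"
  shows "1 + monom 1 m dvd altmaj_gf 0 F {} {} V - (-1) ^ r * altmaj_gf 0 {} F {} V"
proof -
  define E where "E = shifted_altmaj 0 {}"
  have perm: "distinct xs" "length xs = card V" if "xs \<in> permutations_of_set V" for xs
    using that length_finite_permutations_of_set[OF that] by (simp_all add: permutations_of_set_def)
  have "altmaj_gf 0 {} F {} V =
      (\<Sum>xs\<in>permutations_of_set V. if alt_pattern {} F (rev xs) then monom 1 (E (rev xs)) else 0)"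
    unfolding altmaj_gf_def E_def
    by (rule sum.reindex_bij_witness[where i = rev and j = rev]) (auto simp: permutations_of_set_def)
  also have "\<dots> = (\<Sum>xs\<in>permutations_of_set V. if alt_pattern F {} xs then monom 1 (E (rev xs)) else 0)"
  proof (intro sum.cong refl)
    fix xs assume "xs \<in> permutations_of_set V"
    then have "alt_pattern F {} (rev (rev xs)) \<longleftrightarrow> alt_pattern {} F (rev xs)"
      using perm[of xs] assms(3-5) by (intro alt_pattern_rev) simp_all
    then show "(if alt_pattern {} F (rev xs) then monom 1 (E (rev xs)) else 0) =
      (if alt_pattern F {} xs then monom 1 (E (rev xs)) else 0 :: int poly)"
      by simp
  qed
  finally have rev: "altmaj_gf 0 {} F {} V = \<dots>" .
  show ?thesis
    unfolding rev unfolding altmaj_gf_def E_def[symmetric] sum_distrib_left sum_subtractf[symmetric]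
    using one_plus_monom_dvd_altmaj_rev[OF assms(1)] perm assms(3) by (intro dvd_sum) (simp add: E_def)
qed

section \<open>Frames of multiples of \<open>2m\<close>\<close>

definition inner_multiples :: "nat \<Rightarrow> nat \<Rightarrow> nat set" where
  "inner_multiples d r = (\<lambda>t. t * d) ` {1..<r}"

lemma finite_inner_multiples [simp]: "finite (inner_multiples d r)"
  by (simp add: inner_multiples_def)

lemma inner_multiples_one [simp]: "inner_multiples d 1 = {}"
  by (simp add: inner_multiples_def)

lemma card_inner_multiples: "d \<ge> 1 \<Longrightarrow> card (inner_multiples d r) = r - 1"
  unfolding inner_multiples_def by (subst card_image) (auto simp: inj_on_def)

lemma inner_multiples_subset: "d \<ge> 1 \<Longrightarrow> inner_multiples d r \<subseteq> {1..<r * d}"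
  unfolding inner_multiples_def by auto

lemma inner_multiples_reflect:
  assumes "a \<in> inner_multiples d r"
  shows "r * d - a \<in> inner_multiples d r"
proof -
  obtain t where t: "t \<in> {1..<r}" "a = t * d"
    using assms unfolding inner_multiples_def by (rule imageE)
  then have "r * d - a = (r - t) * d" "r - t \<in> {1..<r}"
    by (auto simp: diff_mult_distrib)
  then show ?thesis
    unfolding inner_multiples_def by (rule image_eqI)
qed

lemma inner_multiples_restrict:
  "d \<ge> 1 \<Longrightarrow> t \<le> r \<Longrightarrow> inner_multiples d r \<inter> {..<t * d} = inner_multiples d t"
  unfolding inner_multiples_def by auto

lemma inner_multiples_Suc: "r \<ge> 1 \<Longrightarrow> inner_multiples d (Suc r) = insert (r * d) (inner_multiples d r)"
  unfolding inner_multiples_def by (auto simp: less_Suc_eq)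

lemma dvd_inner_multiples: "a \<in> inner_multiples d r \<Longrightarrow> d dvd a"
  unfolding inner_multiples_def by auto

(* Ignoring the position a, a multiple of 2m, leaves the generating function unchanged modulo f
   and allows cutting the words at a; the left factors are then instances of the case t = a / 2m. *)
lemma altmaj_gf_free_inner_multiple_dvd:
  assumes IH: "\<And>t W I. 1 \<le> t \<Longrightarrow> t < r \<Longrightarrow> finite W \<Longrightarrow> card W = 2 * m * t \<Longrightarrow>
      I \<subseteq> inner_multiples (2 * m) t \<Longrightarrow>
      1 + monom 1 m dvd altmaj_gf 0 I (inner_multiples (2 * m) t - I) {} W"
    and "m \<ge> 1" "finite V" "card V = 2 * m * r"
    and a: "a \<in> inner_multiples (2 * m) r" and I: "I \<subseteq> inner_multiples (2 * m) r - {a}"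
  shows "1 + monom 1 m dvd altmaj_gf 0 I (inner_multiples (2 * m) r - insert a I) {} V"
proof -
  let ?F = "inner_multiples (2 * m)"
  let ?U = "?F r - insert a I"
  obtain t where t: "t \<in> {1..<r}" "a = t * (2 * m)"
    using a unfolding inner_multiples_def by (rule imageE)
  have a_range: "0 < a" "a \<le> card V" "even a"
    using t assms(2,4) by auto
  have "a \<notin> I \<union> ?U"
    using I by auto
  then have "altmaj_gf 0 I ?U {a} V =
      (\<Sum>A | A \<subseteq> V \<and> card A = a.
         altmaj_gf 0 (I \<inter> {..<a}) (?U \<inter> {..<a}) ({a} \<inter> {..<a}) A *
         altmaj_gf (0 + a) (shift_down a I) (shift_down a ?U) (shift_down a {a}) (V - A))"
    by (intro altmaj_gf_split assms(3) a_range) simp_all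
  also have "1 + monom 1 m dvd \<dots>"
  proof (intro dvd_sum dvd_mult2)
    fix A assume "A \<in> {A. A \<subseteq> V \<and> card A = a}"
    then have A: "finite A" "card A = 2 * m * t"
      using t(2) assms(3) finite_subset by (auto simp: mult.commute)
    have "?F r \<inter> {..<a} = ?F t"
      using t assms(2) by (simp add: inner_multiples_restrict)
    then have "?U \<inter> {..<a} = ?F t - I \<inter> {..<a}" "I \<inter> {..<a} \<subseteq> ?F t"
      using I by auto
    then show "1 + monom 1 m dvd altmaj_gf 0 (I \<inter> {..<a}) (?U \<inter> {..<a}) ({a} \<inter> {..<a}) A"
      using IH[of t A "I \<inter> {..<a}"] t(1) A by simp
  qed
  finally have "1 + monom 1 m dvd altmaj_gf 0 I ?U {a} V" .
  moreover have "1 + monom 1 m dvd altmaj_gf 0 I ?U {a} V - altmaj_gf 0 I ?U {} V"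
    using altmaj_gf_mod[of m 0 "{a}"] t by simp
  ultimately have "1 + monom 1 m dvd
      altmaj_gf 0 I ?U {a} V - (altmaj_gf 0 I ?U {a} V - altmaj_gf 0 I ?U {} V)"
    by (rule dvd_diff)
  then show ?thesis
    by simp
qed

lemma altmaj_gf_inner_multiples_pair_dvd:
  assumes IH: "\<And>t W I. 1 \<le> t \<Longrightarrow> t < r \<Longrightarrow> finite W \<Longrightarrow> card W = 2 * m * t \<Longrightarrow>
      I \<subseteq> inner_multiples (2 * m) t \<Longrightarrow>
      1 + monom 1 m dvd altmaj_gf 0 I (inner_multiples (2 * m) t - I) {} W"
    and "m \<ge> 1" "finite V" "card V = 2 * m * r"
    and J: "J \<subseteq> inner_multiples (2 * m) r" "a \<in> J"
  shows "1 + monom 1 m dvd altmaj_gf 0 J (inner_multiples (2 * m) r - J) {} V +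
    altmaj_gf 0 (J - {a}) (inner_multiples (2 * m) r - (J - {a})) {} V"
proof -
  let ?F = "inner_multiples (2 * m) r"
  have sets: "insert a (J - {a}) = J" "insert a (?F - J) = ?F - (J - {a})"
    "?F - insert a (J - {a}) = ?F - J"
    using J by auto
  have "altmaj_gf 0 (J - {a}) (?F - J) {} V =
      altmaj_gf 0 J (?F - J) {} V + altmaj_gf 0 (J - {a}) (?F - (J - {a})) {} V"
    using altmaj_gf_case_split[of 0 "J - {a}" "?F - J" "{}" V a] by (simp only: sets)
  moreover have "1 + monom 1 m dvd altmaj_gf 0 (J - {a}) (?F - insert a (J - {a})) {} V"
    using J by (intro altmaj_gf_free_inner_multiple_dvd[OF IH assms(2-4)]) auto
  ultimately show ?thesis
    by (simp only: sets)
qed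

lemma altmaj_gf_inner_multiples_dvd:
  assumes "m \<ge> 1" "r \<ge> 1" "finite V" "card V = 2 * m * r" "I \<subseteq> inner_multiples (2 * m) r"
  shows "1 + monom 1 m dvd altmaj_gf 0 I (inner_multiples (2 * m) r - I) {} V"
  using assms(2-5)
proof (induction r arbitrary: V I rule: less_induct)
  case (less r)
  let ?f = "1 + monom 1 m :: int poly"
  let ?F = "inner_multiples (2 * m) r"
  define g where "g J = altmaj_gf 0 J (?F - J) {} V" for J
  have "?f dvd g J + g (J - {a})" if "J \<subseteq> ?F" "a \<in> J" for J a
    unfolding g_def using that less.prems
    by (intro altmaj_gf_inner_multiples_pair_dvd[OF less.IH assms(1)]) simp_all
  then have sign: "?f dvd g J - (-1) ^ card J * g {}" if "J \<subseteq> ?F" for J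
    using that by (intro dvd_diff_neg_one_power_card[of ?F]) auto
  have "?F \<subseteq> {1..<card V}"
    using inner_multiples_subset[of "2 * m" r] less.prems(3) assms(1) by (simp add: mult.commute)
  moreover have "card V - a \<in> ?F" if "a \<in> ?F" for a
    using inner_multiples_reflect[OF that] less.prems(3) by (simp add: mult.commute)
  ultimately have "?f dvd altmaj_gf 0 ?F {} {} V - (-1) ^ r * altmaj_gf 0 {} ?F {} V"
    by (intro altmaj_gf_rev assms(1) less.prems(2,3))
  then have by_reversal: "?f dvd g ?F - (-1) ^ r * g {}"
    by (simp add: g_def)
  have by_sign: "?f dvd g ?F - (-1) ^ (r - 1) * g {}"
    using sign[of ?F] assms(1) by (simp add: card_inner_multiples)
  have "?f dvd (-1) ^ r * ((g ?F - (-1) ^ (r - 1) * g {}) - (g ?F - (-1) ^ r * g {}))"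
    using dvd_diff[OF by_sign by_reversal] by (rule dvd_mult)
  also have "(-1) ^ r * ((g ?F - (-1) ^ (r - 1) * g {}) - (g ?F - (-1) ^ r * g {})) = smult 2 (g {})"
    using less.prems(1) by (cases r) (simp_all add: algebra_simps flip: numeral_mult_conv_smult)
  finally have "?f dvd g {}"
    using primitive_dvd_smult_cancel content_one_plus_monom assms(1) by fastforce
  then have "?f dvd (g I - (-1) ^ card I * g {}) + (-1) ^ card I * g {}"
    using sign less.prems(4) by (intro dvd_add dvd_mult) auto
  then show ?case
    unfolding g_def by simp
qed

lemma altmaj_gf_inner_multiples_shifted_dvd:
  assumes "m \<ge> 1" "r \<ge> 1" "finite V" "card V = 2 * m * r" "2 * m dvd s"
  shows "1 + monom 1 m dvd
    altmaj_gf s (inner_multiples (2 * m) r) {} (inner_multiples (2 * m) r) V"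
proof -
  let ?F = "inner_multiples (2 * m) r"
  have "1 + monom 1 m dvd altmaj_gf 0 ?F {} {} V"
    using altmaj_gf_inner_multiples_dvd[OF assms(1-4), of ?F] by simp
  moreover have "1 + monom 1 m dvd altmaj_gf s ?F {} ?F V - altmaj_gf 0 ?F {} {} V"
    using assms(5) dvd_inner_multiples by (intro altmaj_gf_mod) auto
  ultimately have "1 + monom 1 m dvd
      altmaj_gf 0 ?F {} {} V + (altmaj_gf s ?F {} ?F V - altmaj_gf 0 ?F {} {} V)"
    by (rule dvd_add)
  then show ?thesis
    by simp
qed

section \<open>One factor per block\<close>

lemma altmaj_gf_cut_power_dvd:
  assumes IH: "\<And>W s'. finite W \<Longrightarrow> card W < card V \<Longrightarrow> 2 * m dvd s' \<Longrightarrow>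
      (1 + monom 1 m) ^ (card W div (2 * m)) dvd altmaj_gf s' {} {} {} W"
    and "m \<ge> 1" "finite V" "2 * m dvd s" "r \<ge> 1" "r * (2 * m) < card V"
  defines "p \<equiv> r * (2 * m)"
  shows "(1 + monom 1 m) ^ Suc ((card V - p) div (2 * m)) dvd
    altmaj_gf s (inner_multiples (2 * m) r) {} (insert p (inner_multiples (2 * m) r)) V"
proof -
  let ?F = "inner_multiples (2 * m) r"
  have below: "?F \<subseteq> {..<p}"
    using inner_multiples_subset[of "2 * m" r] assms(2) unfolding p_def by auto
  then have "?F \<inter> {..<p} = ?F" "insert p ?F \<inter> {..<p} = ?F"
    "shift_down p ?F = {}" "shift_down p (insert p ?F) = {}" "shift_down p {} = {}"
    by (auto simp: shift_down_def)
  moreover have "p \<notin> ?F"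
    using below by auto
  ultimately have "altmaj_gf s ?F {} (insert p ?F) V =
      (\<Sum>A | A \<subseteq> V \<and> card A = p. altmaj_gf s ?F {} ?F A * altmaj_gf (s + p) {} {} {} (V - A))"
    using altmaj_gf_split[of V p "insert p ?F" ?F "{}" s] assms(2,3,5,6) unfolding p_def by simp
  also have "(1 + monom 1 m) ^ Suc ((card V - p) div (2 * m)) dvd \<dots>"
  proof (intro dvd_sum)
    fix A assume A: "A \<in> {A. A \<subseteq> V \<and> card A = p}"
    then have "finite A"
      using assms(3) by (auto intro: finite_subset)
    moreover have "card (V - A) = card V - p"
      using A \<open>finite A\<close> by (simp add: card_Diff_subset)
    moreover have "card V - p < card V" "2 * m dvd s + p"
      using assms(2,4,5,6) unfolding p_def by auto
    ultimately have "1 + monom 1 m dvd altmaj_gf s ?F {} ?F A"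
      "(1 + monom 1 m) ^ ((card V - p) div (2 * m)) dvd altmaj_gf (s + p) {} {} {} (V - A)"
      using altmaj_gf_inner_multiples_shifted_dvd[OF assms(2,5), of A s] IH[of "V - A" "s + p"] A assms(3,4)
      by (simp_all add: p_def mult.commute)
    from mult_dvd_mono[OF this] show "(1 + monom 1 m) ^ Suc ((card V - p) div (2 * m)) dvd
        altmaj_gf s ?F {} ?F A * altmaj_gf (s + p) {} {} {} (V - A)"
      by simp
  qed
  finally show ?thesis .
qed

lemma altmaj_gf_inner_multiples_expand:
  assumes "d \<ge> 1" "r \<ge> 1" "r * d < card V"
  shows "altmaj_gf s (inner_multiples d r) {} (inner_multiples d r) V =
    altmaj_gf s (inner_multiples d r) {} (insert (r * d) (inner_multiples d r)) V +
    (monom 1 (r * d + s) - 1) * altmaj_gf s (inner_multiples d (Suc r)) {} (inner_multiples d (Suc r)) V"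
proof -
  have "r * d \<in> {1..<card V}" "r * d \<notin> inner_multiples d r"
    using assms inner_multiples_subset[of d r] by auto
  then show ?thesis
    unfolding inner_multiples_Suc[OF assms(2)] by (rule altmaj_gf_insert_ignored)
qed

lemma Suc_diff_mult_div:
  fixes d r n :: nat
  assumes "0 < d" "Suc r * d \<le> n"
  shows "Suc ((n - Suc r * d) div d) = (n - r * d) div d"
  using le_div_geq[of d "n - r * d"] assms by (simp add: add.commute)

lemma altmaj_gf_inner_multiples_power_dvd:
  assumes IH: "\<And>W s'. finite W \<Longrightarrow> card W < card V \<Longrightarrow> 2 * m dvd s' \<Longrightarrow>
      (1 + monom 1 m) ^ (card W div (2 * m)) dvd altmaj_gf s' {} {} {} W"
    and "m \<ge> 1" "finite V" "2 * m dvd s"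
  shows "r \<ge> 1 \<Longrightarrow> r * (2 * m) \<le> card V \<Longrightarrow>
    (1 + monom 1 m) ^ Suc ((card V - r * (2 * m)) div (2 * m)) dvd
      altmaj_gf s (inner_multiples (2 * m) r) {} (inner_multiples (2 * m) r) V"
proof (induction "card V - r * (2 * m)" arbitrary: r rule: less_induct)
  case less
  let ?f = "1 + monom 1 m :: int poly"
  let ?F = "inner_multiples (2 * m)"
  define p where "p = r * (2 * m)"
  define k where "k = (card V - p) div (2 * m)"
  show ?case
  proof (cases "p = card V")
    case True
    then show ?thesis
      using altmaj_gf_inner_multiples_shifted_dvd[OF assms(2) less.prems(1) assms(3) _ assms(4)]
      by (simp add: p_def mult.commute)
  next
    case False
    then have "p < card V"
      using less.prems(2) by (simp add: p_def)
    have "?f ^ k dvd altmaj_gf s (?F (Suc r)) {} (?F (Suc r)) V"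
    proof (cases "Suc r * (2 * m) \<le> card V")
      case True
      then have "Suc ((card V - Suc r * (2 * m)) div (2 * m)) = k"
        unfolding k_def p_def using assms(2) by (intro Suc_diff_mult_div) auto
      moreover have "card V - Suc r * (2 * m) < card V - r * (2 * m)"
        using True assms(2) by simp
      ultimately show ?thesis
        using less.hyps[of "Suc r"] True by simp
    next
      case False
      then have "card V - p < 2 * m"
        using assms(2) unfolding p_def by simp
      then show ?thesis
        by (simp add: k_def)
    qed
    moreover have "?f dvd monom 1 (p + s) - 1"
      using assms(4) unfolding p_def by (intro one_plus_monom_dvd_monom_minus_one) simp
    ultimately have "?f ^ Suc k dvd (monom 1 (p + s) - 1) * altmaj_gf s (?F (Suc r)) {} (?F (Suc r)) V"
      by (simp add: mult_dvd_mono)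
    moreover have "?f ^ Suc k dvd altmaj_gf s (?F r) {} (insert p (?F r)) V"
      using altmaj_gf_cut_power_dvd[OF IH assms(2-4) less.prems(1)] \<open>p < card V\<close>
      unfolding k_def p_def by simp
    ultimately show ?thesis
      using altmaj_gf_inner_multiples_expand[of "2 * m" r V s] assms(2) less.prems(1) \<open>p < card V\<close>
      unfolding k_def p_def by simp
  qed
qed

lemma altmaj_gf_power_dvd:
  assumes "m \<ge> 1" "finite V" "2 * m dvd s"
  shows "(1 + monom 1 m) ^ (card V div (2 * m)) dvd altmaj_gf s {} {} {} V"
  using assms(2,3)
proof (induction "card V" arbitrary: V s rule: less_induct)
  case less
  show ?case
  proof (cases "2 * m \<le> card V")
    case True
    have "Suc ((card V - 1 * (2 * m)) div (2 * m)) = card V div (2 * m)"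
      using True assms(1) by (simp add: le_div_geq)
    then show ?thesis
      using altmaj_gf_inner_multiples_power_dvd[OF less.hyps assms(1) less.prems, of 1] True
      unfolding inner_multiples_one by simp
  qed simp
qed

theorem theorem4p3:
  fixes n m :: nat
  assumes "n \<ge> 1" and "m \<ge> 1"
  shows "(1 + monom (1::int) m) ^ (n div (2 * m)) dvd altmaj_poly n"
  using altmaj_gf_power_dvd[OF assms(2), of "{1..n}" 0] by (simp add: altmaj_poly_eq_gf)

end
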